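(* Let $q_1,q_2$ be integers with $1\le q_1\le q_2$, $A=\begin{pmatrix}3q_1&0\\0&3q_2\end{pmatrix}$, $\mathcal{D}=\left\{\begin{pmatrix}0\\0\end{pmatrix},\begin{pmatrix}1\\0\end{pmatrix},\begin{pmatrix}0\\1\end{pmatrix}\right\}$, and let $\tau$ be a regular mapping with associated enumeration $\{\lambda_k\}_{k\in\mathbb{Z}}$ of $\tau^*(\Theta_3^\tau)$. For $n\ge1$ let $\alpha_n=\frac{3^n-1}{2}$ and $\mu_n=\delta_{A^{-1}\mathcal{D}}*\delta_{A^{-2}\mathcal{D}}*\cdots*\delta_{A^{-n}\mathcal{D}}$. Then $\mu_n$ is a spectral measure with spectrum $\Lambda_{\alpha_n}=\{\lambda_k\}_{k=-\alpha_n}^{\alpha_n}$.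
   Context: $\delta_E=\frac1{\#E}\sum_{e\in E}\delta_e$ for finite $E$. A measure $\mu$ is spectral with spectrum $\Lambda$ if $\{e^{-2\pi i\langle\lambda,x\rangle}:\lambda\in\Lambda\}$ is an orthonormal basis of $L^2(\mu)$. Notation: $\Gamma_{q_1,q_2}=\{(k,l)^T\in\mathbb{Z}^2:-\frac{3q_1}{2}\le k<\frac{3q_1}{2},-\frac{3q_2}{2}\le l<\frac{3q_2}{2}\}$; $x\equiv y\pmod A$ means $x-y\in A\mathbb{Z}^2$; $\mathcal{E}_{q_1}=\{(a_1,a_2)^T\in\Gamma_{q_1,q_2}:-\frac{q_1}{2}\le a_1<\frac{q_1}{2}\}$; $\Theta_3=\{-1,0,1\}$, $\Theta_3^n$ words of length $n$, $\Theta_3^*=\bigcup_{n\ge1}\Theta_3^n$, $\Theta_3^\infty$ infinite words, $I|_k$ length-$k$ prefix, $0^k$ word of $k$ zeros. A regular mapping is $\tau:\Theta_3^*\to\Gamma_{q_1,q_2}$ with (i) $\tau(0^ki)=i\begin{pmatrix}q_1\\-q_2\end{pmatrix}$ for $k\ge0$, $i\in\Theta_3$; (ii) for $k\ge1$, $I\in\Theta_3^k\setminus\{0^k\}$ there is $e_I\in\mathcal{E}_{q_1}$ with $\tau(Ij)\equiv e_I+j\begin{pmatrix}q_1\\-q_2\end{pmatrix}\pmod A$ for all $j\in\Theta_3$; (iii) for every $I\in\Theta_3^*$, $\tau(I0^n)=\mathbf{0}$ for all large $n$. Set $\tau^*(I)=\sum_{k\ge1}A^{k-1}\tau(I|_k)$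 for $I\in\Theta_3^\tau=\{I\in\Theta_3^\infty:\tau(I|_n)=\mathbf{0}\text{ for all large }n\}$. The enumeration: $\lambda_0=\mathbf{0}$, and for $k\ne0$ written uniquely as $k=i_1+i_23+\cdots+i_n3^{n-1}$ with $i_j\in\Theta_3$, $i_n\ne0$, $\lambda_k=\tau^*(i_1i_2\cdots i_n0^\infty)$. *)

theory Defs
  imports "HOL-Analysis.Analysis"
begin

definition Theta3 :: "int set" where
  "Theta3 = {-1, 0, 1}"

text \<open>Finite words over Theta3 of length at least 1 (the set Theta3-star) are
  lists; infinite words are functions nat => int (position 0 is the first letter).\<close>

definition finite_words :: "int list set" where
  "finite_words = {I. I \<noteq> [] \<and> set I \<subseteq> Theta3}"

definition prefix :: "(nat \<Rightarrow> int) \<Rightarrow> nat \<Rightarrow> int list" where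
  "prefix w k = map w [0..<k]"

definition Gamma :: "int \<Rightarrow> int \<Rightarrow> (int \<times> int) set" where
  "Gamma q1 q2 = {(k, l). - 3 * q1 \<le> 2 * k \<and> 2 * k < 3 * q1 \<and> - 3 * q2 \<le> 2 * l \<and> 2 * l < 3 * q2}"

definition Eq1 :: "int \<Rightarrow> int \<Rightarrow> (int \<times> int) set" where
  "Eq1 q1 q2 = {(a1, a2) \<in> Gamma q1 q2. - q1 \<le> 2 * a1 \<and> 2 * a1 < q1}"

definition congA :: "int \<Rightarrow> int \<Rightarrow> int \<times> int \<Rightarrow> int \<times> int \<Rightarrow> bool" where
  "congA q1 q2 x y \<longleftrightarrow> (3 * q1) dvd (fst x - fst y) \<and> (3 * q2) dvd (snd x - snd y)"

definition Apow :: "int \<Rightarrow> int \<Rightarrow> nat \<Rightarrow> int \<times> int \<Rightarrow> int \<times> int" where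
  "Apow q1 q2 k x = ((3 * q1) ^ k * fst x, (3 * q2) ^ k * snd x)"

definition regular_mapping :: "int \<Rightarrow> int \<Rightarrow> (int list \<Rightarrow> int \<times> int) \<Rightarrow> bool" where
  "regular_mapping q1 q2 \<tau> \<longleftrightarrow>
     (\<forall>I \<in> finite_words. \<tau> I \<in> Gamma q1 q2) \<and>
     (\<forall>k::nat. \<forall>i \<in> Theta3. \<tau> (replicate k 0 @ [i]) = (i * q1, - i * q2)) \<and>
     (\<forall>I \<in> finite_words. I \<noteq> replicate (length I) 0 \<longrightarrow>
        (\<exists>e \<in> Eq1 q1 q2. \<forall>j \<in> Theta3.
           congA q1 q2 (\<tau> (I @ [j])) (fst e + j * q1, snd e - j * q2))) \<and>
     (\<forall>I \<in> finite_words. \<exists>N. \<forall>n \<ge> N. \<tau> (I @ replicate n 0) = (0, 0))"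

definition tau_star :: "int \<Rightarrow> int \<Rightarrow> (int list \<Rightarrow> int \<times> int) \<Rightarrow> (nat \<Rightarrow> int) \<Rightarrow> int \<times> int" where
  "tau_star q1 q2 \<tau> w =
     (let N = (LEAST N. \<forall>n \<ge> N. \<tau> (prefix w n) = (0, 0))
      in (\<Sum>k = 1..N. Apow q1 q2 (k - 1) (\<tau> (prefix w k))))"

definition bt_digits :: "int \<Rightarrow> int list" where
  "bt_digits k = (THE I. I \<noteq> [] \<and> set I \<subseteq> Theta3 \<and> last I \<noteq> 0 \<and>
                        k = (\<Sum>j < length I. I ! j * 3 ^ j))"

definition enum_lambda :: "int \<Rightarrow> int \<Rightarrow> (int list \<Rightarrow> int \<times> int) \<Rightarrow> int \<Rightarrow> int \<times> int" where
  "enum_lambda q1 q2 \<tau> k =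
     (if k = 0 then (0, 0)
      else (let I = bt_digits k in
            tau_star q1 q2 \<tau> (\<lambda>n. if n < length I then I ! n else 0)))"

text \<open>A discrete measure with finite support is represented by its weight function.\<close>
type_synonym dmeasure = "real \<times> real \<Rightarrow> real"

definition dsupp :: "dmeasure \<Rightarrow> (real \<times> real) set" where
  "dsupp \<mu> = {x. \<mu> x \<noteq> 0}"

definition delta_set :: "(real \<times> real) set \<Rightarrow> dmeasure" where
  "delta_set E = (\<lambda>x. if x \<in> E then 1 / real (card E) else 0)"

definition dconv :: "dmeasure \<Rightarrow> dmeasure \<Rightarrow> dmeasure" where
  "dconv \<mu> \<nu> = (\<lambda>z. \<Sum>x \<in> dsupp \<mu>. \<mu> x * \<nu> (z - x))"

definition AinvD :: "int \<Rightarrow> int \<Rightarrow> nat \<Rightarrow> (real \<times> real) set" where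
  "AinvD q1 q2 j = {(0, 0), (1 / (3 * real_of_int q1) ^ j, 0), (0, 1 / (3 * real_of_int q2) ^ j)}"

fun mu_n :: "int \<Rightarrow> int \<Rightarrow> nat \<Rightarrow> dmeasure" where
  "mu_n q1 q2 0 = delta_set {(0, 0)}"
| "mu_n q1 q2 (Suc n) = dconv (mu_n q1 q2 n) (delta_set (AinvD q1 q2 (Suc n)))"

definition expo :: "real \<times> real \<Rightarrow> real \<times> real \<Rightarrow> complex" where
  "expo l x = exp (- 2 * pi * \<i> * complex_of_real (l \<bullet> x))"

definition L2_inner :: "dmeasure \<Rightarrow> (real \<times> real \<Rightarrow> complex) \<Rightarrow> (real \<times> real \<Rightarrow> complex) \<Rightarrow> complex" where
  "L2_inner \<mu> f g = (\<Sum>x \<in> dsupp \<mu>. complex_of_real (\<mu> x) * f x * cnj (g x))"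

text \<open>For a positive measure with finite support, L^2(mu) is the finite-dimensional
  space of functions on the support; an orthonormal family is a basis iff its span
  is everything (span is automatically closed).\<close>
definition spectral_with :: "dmeasure \<Rightarrow> (real \<times> real) set \<Rightarrow> bool" where
  "spectral_with \<mu> \<Lambda> \<longleftrightarrow>
     finite (dsupp \<mu>) \<and> (\<forall>x. \<mu> x \<ge> 0) \<and>
     (\<forall>l \<in> \<Lambda>. \<forall>l' \<in> \<Lambda>. L2_inner \<mu> (expo l) (expo l') = (if l = l' then 1 else 0)) \<and>
     (\<forall>f. \<exists>F c. finite F \<and> F \<subseteq> \<Lambda> \<and>
        (\<forall>x \<in> dsupp \<mu>. f x = (\<Sum>l \<in> F. c l * expo l x)))"

definition of_int_pair :: "int \<times> int \<Rightarrow> real \<times> real" where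
  "of_int_pair p = (real_of_int (fst p), real_of_int (snd p))"

end

theory Submission
  imports Defs "Jordan_Normal_Form.Determinant"
begin

(* The Fourier transform of mu_n at xi is the product over j = 1..n of
   (1 + e(xi_1 / (3 q1)^j) + e(xi_2 / (3 q2)^j)) / 3, where e(t) = exp (-2 pi i t).
   If the balanced ternary digits of k and k' first differ at position p + 1 (p < n since
   |k|, |k'| <= alpha_n), conditions (i) and (ii) of a regular mapping give
   lambda_k - lambda_k' = A^p (a q1, -a q2) mod A^(p+1) with a = i_(p+1) - i'_(p+1), not divisible by 3.
   The (p+1)-st factor at lambda_k - lambda_k' is then (1 + w + w^2) / 3 for a primitive cube
   root of unity w, so it vanishes: the 3^n exponentials are orthonormal in L^2(mu_n).
   Since mu_n has at most 3^n atoms, they also span. *)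

section \<open>Orthonormal families on a finite set\<close>

lemma weighted_orthonormal_columns_span:
  fixes a :: "nat \<Rightarrow> nat \<Rightarrow> complex" and w :: "nat \<Rightarrow> complex"
  assumes "m \<le> n"
    and orthonormal: "\<And>j j'. j < n \<Longrightarrow> j' < n \<Longrightarrow>
      (\<Sum>i<m. w i * a i j * cnj (a i j')) = (if j = j' then 1 else 0)"
  shows "\<exists>d. \<forall>i<m. y i = (\<Sum>j<n. d j * a i j)"
proof -
  text \<open>Pad the \<open>m \<times> n\<close> matrix \<open>a\<close> with zero rows to a square matrix \<open>E\<close>; the weighted
    adjoint \<open>M\<close> is then a left inverse, hence also a right inverse of \<open>E\<close>.\<close>
  define E where "E = mat n n (\<lambda>(i, j). if i < m then a i j else 0)"
  define M where "M = mat n n (\<lambda>(j, i). if i < m then w i * cnj (a i j) else 0)"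
  have E: "E \<in> carrier_mat n n" and M: "M \<in> carrier_mat n n" unfolding E_def M_def by auto
  have "M * E = 1\<^sub>m n"
  proof (rule eq_matI)
    fix j' j assume "j' < dim_row (1\<^sub>m n :: complex mat)" "j < dim_col (1\<^sub>m n :: complex mat)"
    hence jj: "j' < n" "j < n" by auto
    have "(M * E) $$ (j', j) = (\<Sum>i<n. if i < m then w i * a i j * cnj (a i j') else 0)"
      using jj unfolding M_def E_def by (auto simp: scalar_prod_def atLeast0LessThan intro!: sum.cong)
    also have "\<dots> = (\<Sum>i<m. w i * a i j * cnj (a i j'))"
      using \<open>m \<le> n\<close> by (intro sum.mono_neutral_cong_right) auto
    also have "\<dots> = 1\<^sub>m n $$ (j', j)" using orthonormal jj by auto
    finally show "(M * E) $$ (j', j) = 1\<^sub>m n $$ (j', j)" .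
  qed (use M E in auto)
  hence "E * M = 1\<^sub>m n" using mat_mult_left_right_inverse[OF M E] by blast
  define v where "v = vec n (\<lambda>i. if i < m then y i else 0)"
  have "v \<in> carrier_vec n" unfolding v_def by auto
  hence Ev: "E *\<^sub>v (M *\<^sub>v v) = v" using assoc_mult_mat_vec[OF E M] \<open>E * M = 1\<^sub>m n\<close> by simp
  show ?thesis
  proof (intro exI allI impI)
    fix i assume "i < m"
    hence "y i = (E *\<^sub>v (M *\<^sub>v v)) $ i" using \<open>m \<le> n\<close> Ev v_def by simp
    also have "\<dots> = (\<Sum>j<n. (M *\<^sub>v v) $ j * a i j)"
      using \<open>i < m\<close> \<open>m \<le> n\<close> M unfolding E_def
      by (auto simp: scalar_prod_def atLeast0LessThan mult.commute intro!: sum.cong)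
    finally show "y i = (\<Sum>j<n. (M *\<^sub>v v) $ j * a i j)" .
  qed
qed

lemma orthonormal_family_spans:
  fixes S :: "'a set" and L :: "'b set" and w :: "'a \<Rightarrow> complex" and e :: "'b \<Rightarrow> 'a \<Rightarrow> complex"
  assumes "finite S" "finite L" "card S \<le> card L"
    and orthonormal: "\<And>l l'. l \<in> L \<Longrightarrow> l' \<in> L \<Longrightarrow>
      (\<Sum>x\<in>S. w x * e l x * cnj (e l' x)) = (if l = l' then 1 else 0)"
  shows "\<exists>c. \<forall>x\<in>S. f x = (\<Sum>l\<in>L. c l * e l x)"
proof -
  obtain xs where xs: "set xs = S" "distinct xs" using finite_distinct_list[OF \<open>finite S\<close>] by blast
  obtain ls where ls: "set ls = L" "distinct ls" using finite_distinct_list[OF \<open>finite L\<close>] by blast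
  have sum_xs: "(\<Sum>i<length xs. g (xs ! i)) = (\<Sum>x\<in>S. g x)" for g :: "'a \<Rightarrow> complex"
    using sum.reindex_bij_betw[OF bij_betw_nth[OF xs(2) refl xs(1)[symmetric]], of g] by simp
  have sum_ls: "(\<Sum>j<length ls. g (ls ! j)) = (\<Sum>l\<in>L. g l)" for g :: "'b \<Rightarrow> complex"
    using sum.reindex_bij_betw[OF bij_betw_nth[OF ls(2) refl ls(1)[symmetric]], of g] by simp
  have "length xs \<le> length ls" using assms(3) xs ls distinct_card by metis
  then obtain d where d: "\<forall>i<length xs. f (xs ! i) = (\<Sum>j<length ls. d j * e (ls ! j) (xs ! i))"
  proof (atomize_elim, rule weighted_orthonormal_columns_span)
    fix j j' assume "j < length ls" "j' < length ls"
    have "(\<Sum>i<length xs. w (xs ! i) * e (ls ! j) (xs ! i) * cnj (e (ls ! j') (xs ! i))) =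
        (\<Sum>x\<in>S. w x * e (ls ! j) x * cnj (e (ls ! j') x))" by (rule sum_xs)
    also have "\<dots> = (if ls ! j = ls ! j' then 1 else 0)"
      using ls(1) \<open>j < length ls\<close> \<open>j' < length ls\<close> by (intro orthonormal) auto
    also have "\<dots> = (if j = j' then 1 else 0)"
      using ls(2) \<open>j < length ls\<close> \<open>j' < length ls\<close> by (simp add: nth_eq_iff_index_eq)
    finally show "(\<Sum>i<length xs. w (xs ! i) * e (ls ! j) (xs ! i) * cnj (e (ls ! j') (xs ! i))) =
        (if j = j' then 1 else 0)" .
  qed
  define c where "c = (\<lambda>l. d (inv_into {..<length ls} ((!) ls) l))"
  have "c (ls ! j) = d j" if "j < length ls" for j
    using that ls(2) unfolding c_def by (simp add: inv_into_f_f inj_on_nth)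
  hence "f x = (\<Sum>l\<in>L. c l * e l x)" if "x \<in> S" for x
    using d that xs sum_ls[of "\<lambda>l. c l * e l x"] by (auto simp: in_set_conv_nth)
  thus ?thesis by blast
qed

section \<open>Finitely supported measures and their Fourier transforms\<close>

definition dintegral :: "dmeasure \<Rightarrow> (real \<times> real \<Rightarrow> complex) \<Rightarrow> complex" where
  "dintegral \<mu> g = (\<Sum>x\<in>dsupp \<mu>. complex_of_real (\<mu> x) * g x)"

lemma dsupp_delta_set: "finite E \<Longrightarrow> E \<noteq> {} \<Longrightarrow> dsupp (delta_set E) = E"
  by (auto simp: dsupp_def delta_set_def)

lemma delta_set_nonneg: "delta_set E x \<ge> 0"
  by (simp add: delta_set_def)

lemma dintegral_delta_set:
  assumes "finite E" "E \<noteq> {}"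
  shows "dintegral (delta_set E) g = (\<Sum>x\<in>E. g x) / of_nat (card E)"
  unfolding dintegral_def dsupp_delta_set[OF assms] by (simp add: delta_set_def sum_divide_distrib)

lemma dsupp_dconv_subset: "dsupp (dconv \<mu> \<nu>) \<subseteq> (\<lambda>(x, y). x + y) ` (dsupp \<mu> \<times> dsupp \<nu>)"
proof
  fix z assume "z \<in> dsupp (dconv \<mu> \<nu>)"
  hence "(\<Sum>x \<in> dsupp \<mu>. \<mu> x * \<nu> (z - x)) \<noteq> 0" by (simp add: dsupp_def dconv_def)
  then obtain x where x: "x \<in> dsupp \<mu>" "\<mu> x * \<nu> (z - x) \<noteq> 0" by (meson sum.neutral)
  thus "z \<in> (\<lambda>(x, y). x + y) ` (dsupp \<mu> \<times> dsupp \<nu>)"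
    by (auto simp: dsupp_def intro!: image_eqI[where x = "(x, z - x)"])
qed

lemma finite_dsupp_dconv: "finite (dsupp \<mu>) \<Longrightarrow> finite (dsupp \<nu>) \<Longrightarrow> finite (dsupp (dconv \<mu> \<nu>))"
  using dsupp_dconv_subset finite_subset by blast

lemma card_dsupp_dconv_le:
  assumes "finite (dsupp \<mu>)" "finite (dsupp \<nu>)"
  shows "card (dsupp (dconv \<mu> \<nu>)) \<le> card (dsupp \<mu>) * card (dsupp \<nu>)"
proof -
  have "card (dsupp (dconv \<mu> \<nu>)) \<le> card ((\<lambda>(x, y). x + y) ` (dsupp \<mu> \<times> dsupp \<nu>))"
    using dsupp_dconv_subset assms by (intro card_mono) auto
  also have "\<dots> \<le> card (dsupp \<mu> \<times> dsupp \<nu>)" by (rule card_image_le) (use assms in auto)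
  finally show ?thesis by (simp add: card_cartesian_product)
qed

lemma dconv_nonneg: "(\<And>x. \<mu> x \<ge> 0) \<Longrightarrow> (\<And>x. \<nu> x \<ge> 0) \<Longrightarrow> dconv \<mu> \<nu> z \<ge> 0"
  by (simp add: dconv_def sum_nonneg)

lemma dintegral_dconv:
  assumes "finite (dsupp \<mu>)" "finite (dsupp \<nu>)"
  shows "dintegral (dconv \<mu> \<nu>) g = dintegral \<mu> (\<lambda>x. dintegral \<nu> (\<lambda>y. g (x + y)))"
proof -
  define T where "T = (\<lambda>(x, y). x + y) ` (dsupp \<mu> \<times> dsupp \<nu>)"
  have "finite T" unfolding T_def using assms by auto
  have shift: "(\<Sum>z\<in>T. complex_of_real (\<nu> (z - x)) * g z) = (\<Sum>y\<in>dsupp \<nu>. complex_of_real (\<nu> y) * g (x + y))"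
    if "x \<in> dsupp \<mu>" for x
  proof -
    have "(\<lambda>y. x + y) ` dsupp \<nu> \<subseteq> T" using that unfolding T_def by auto
    hence "(\<Sum>z\<in>T. complex_of_real (\<nu> (z - x)) * g z) =
        (\<Sum>z\<in>(\<lambda>y. x + y) ` dsupp \<nu>. complex_of_real (\<nu> (z - x)) * g z)"
      using \<open>finite T\<close>
      by (intro sum.mono_neutral_right) (force simp: dsupp_def intro: image_eqI[where x = "_ - x"])+
    also have "\<dots> = (\<Sum>y\<in>dsupp \<nu>. complex_of_real (\<nu> y) * g (x + y))"
      by (subst sum.reindex) (auto simp: inj_on_def)
    finally show ?thesis .
  qed
  have "dintegral (dconv \<mu> \<nu>) g = (\<Sum>z\<in>T. complex_of_real (dconv \<mu> \<nu> z) * g z)"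
    unfolding dintegral_def using dsupp_dconv_subset[of \<mu> \<nu>] \<open>finite T\<close>
    by (intro sum.mono_neutral_left) (auto simp: T_def dsupp_def)
  also have "\<dots> = (\<Sum>z\<in>T. \<Sum>x\<in>dsupp \<mu>. complex_of_real (\<mu> x) * (complex_of_real (\<nu> (z - x)) * g z))"
    unfolding dconv_def by (simp add: sum_distrib_right mult.assoc)
  also have "\<dots> = (\<Sum>x\<in>dsupp \<mu>. complex_of_real (\<mu> x) * (\<Sum>z\<in>T. complex_of_real (\<nu> (z - x)) * g z))"
    by (subst sum.swap) (simp add: sum_distrib_left)
  also have "\<dots> = dintegral \<mu> (\<lambda>x. dintegral \<nu> (\<lambda>y. g (x + y)))"
    unfolding dintegral_def by (simp add: shift)
  finally show ?thesis .
qed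

lemma expo_add: "expo l (x + y) = expo l x * expo l y"
  unfolding expo_def by (simp add: inner_add_right algebra_simps flip: exp_add)

lemma expo_zero_left [simp]: "expo 0 x = 1"
  by (simp add: expo_def)

lemma expo_zero_right [simp]: "expo l (0, 0) = 1"
  by (simp add: expo_def flip: zero_prod_def)

lemma expo_mult_cnj: "expo l x * cnj (expo l' x) = expo (l - l') x"
  unfolding expo_def by (simp add: exp_cnj inner_diff_left algebra_simps flip: exp_add)

lemma L2_inner_expo: "L2_inner \<mu> (expo l) (expo l') = dintegral \<mu> (expo (l - l'))"
  unfolding L2_inner_def dintegral_def by (simp add: mult.assoc expo_mult_cnj)

lemma dintegral_dconv_expo:
  assumes "finite (dsupp \<mu>)" "finite (dsupp \<nu>)"
  shows "dintegral (dconv \<mu> \<nu>) (expo l) = dintegral \<mu> (expo l) * dintegral \<nu> (expo l)"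
proof -
  have "dintegral \<nu> (\<lambda>y. expo l x * expo l y) = expo l x * dintegral \<nu> (expo l)" for x
    by (simp add: dintegral_def sum_distrib_left mult_ac)
  hence "dintegral (dconv \<mu> \<nu>) (expo l) = dintegral \<mu> (\<lambda>x. expo l x * dintegral \<nu> (expo l))"
    by (simp add: dintegral_dconv[OF assms] expo_add)
  also have "\<dots> = dintegral \<mu> (expo l) * dintegral \<nu> (expo l)"
    by (simp add: dintegral_def sum_distrib_right mult_ac)
  finally show ?thesis .
qed

lemma finite_AinvD [simp]: "finite (AinvD q1 q2 j)" and AinvD_nonempty [simp]: "AinvD q1 q2 j \<noteq> {}"
  by (simp_all add: AinvD_def)

lemma finite_dsupp_mu_n: "finite (dsupp (mu_n q1 q2 n))"
  by (induction n) (simp_all add: dsupp_delta_set finite_dsupp_dconv)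

lemma mu_n_nonneg: "mu_n q1 q2 n x \<ge> 0"
  by (induction n arbitrary: x) (simp_all add: delta_set_nonneg dconv_nonneg)

lemma card_dsupp_mu_n_le: "card (dsupp (mu_n q1 q2 n)) \<le> 3 ^ n"
proof (induction n)
  case 0
  show ?case by (simp add: dsupp_delta_set)
next
  case (Suc n)
  have "card (AinvD q1 q2 (Suc n)) \<le> 3"
    unfolding AinvD_def by (simp add: card_insert_if)
  hence "card (dsupp (mu_n q1 q2 (Suc n))) \<le> 3 ^ n * 3"
    using card_dsupp_dconv_le[OF finite_dsupp_mu_n, of "delta_set (AinvD q1 q2 (Suc n))"] Suc
    by (simp add: dsupp_delta_set) (meson mult_le_mono order_trans)
  thus ?case by simp
qed

lemma dintegral_mu_n_expo:
  "dintegral (mu_n q1 q2 n) (expo l) = (\<Prod>j = 1..n. dintegral (delta_set (AinvD q1 q2 j)) (expo l))"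
  by (induction n)
    (simp_all add: dintegral_delta_set dintegral_dconv_expo finite_dsupp_mu_n dsupp_delta_set
      prod.nat_ivl_Suc')

lemma L2_inner_mu_n_expo_self: "L2_inner (mu_n q1 q2 n) (expo l) (expo l) = 1"
  by (simp add: L2_inner_expo dintegral_mu_n_expo dintegral_delta_set)

section \<open>Zeros of the Fourier factors\<close>

lemma exp_2pi_add_int:
  "exp (- 2 * complex_of_real pi * \<i> * complex_of_real (r + real_of_int s)) =
   exp (- 2 * complex_of_real pi * \<i> * complex_of_real r)"
proof -
  have "- 2 * complex_of_real pi * \<i> * complex_of_real (r + real_of_int s) =
      - 2 * complex_of_real pi * \<i> * complex_of_real r + \<i> * (of_int (- s) * (of_real pi * 2))"
    by (simp add: algebra_simps)
  thus ?thesis by (simp only: exp_plus_2pin)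
qed

lemma cube_roots_of_unity_sum:
  fixes a :: int
  assumes "\<not> 3 dvd a"
  shows "1 + exp (- 2 * complex_of_real pi * \<i> * complex_of_real (a / 3))
           + exp (- 2 * complex_of_real pi * \<i> * complex_of_real (- a / 3)) = 0"
proof -
  define u where "u = exp (- 2 * complex_of_real pi * \<i> * complex_of_real (a / 3))"
  define v where "v = exp (- 2 * complex_of_real pi * \<i> * complex_of_real (- a / 3))"
  have "u ^ 3 = exp (\<i> * (of_int (- a) * (of_real pi * 2)))"
    unfolding u_def by (simp add: algebra_simps flip: exp_of_nat_mult)
  hence u3: "u ^ 3 = 1" using exp_plus_2pin[of 0 "- a"] by simp
  have "u \<noteq> 1"
  proof
    assume "u = 1"
    then obtain m :: int where "- 2 * pi * a / 3 = of_int (2 * m) * pi"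
      unfolding u_def exp_eq_1 by auto
    hence "pi * real_of_int a = pi * (3 * of_int (- m))" by (simp add: field_simps)
    hence "real_of_int a = 3 * of_int (- m)" using mult_cancel_left pi_neq_zero by blast
    hence "a = 3 * (- m)" by linarith
    with assms show False by simp
  qed
  have "(u - 1) * (1 + u + u ^ 2) = u ^ 3 - 1" by (simp add: algebra_simps power2_eq_square power3_eq_cube)
  with u3 \<open>u \<noteq> 1\<close> have "1 + u + u ^ 2 = 0" by simp
  moreover have "u * v = 1" unfolding u_def v_def by (simp add: algebra_simps flip: exp_add)
  hence "v = u ^ 2" using u3 by (metis mult.assoc mult_1_right power2_eq_square power3_eq_cube mult.commute)
  ultimately show ?thesis unfolding u_def v_def by simp
qed

lemma fourier_delta_AinvD_eq_0:
  assumes "q1 \<noteq> 0" "q2 \<noteq> 0" "\<not> 3 dvd a"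
    and "(3 * q1) ^ Suc p dvd D1 - (3 * q1) ^ p * (a * q1)"
    and "(3 * q2) ^ Suc p dvd D2 + (3 * q2) ^ p * (a * q2)"
  shows "dintegral (delta_set (AinvD q1 q2 (Suc p))) (expo (of_int_pair (D1, D2))) = 0"
proof -
  obtain s1 where s1: "D1 - (3 * q1) ^ p * (a * q1) = (3 * q1) ^ Suc p * s1" using assms(4) by (elim dvdE)
  obtain s2 where s2: "D2 + (3 * q2) ^ p * (a * q2) = (3 * q2) ^ Suc p * s2" using assms(5) by (elim dvdE)
  define x1 where "x1 = 1 / (3 * real_of_int q1) ^ Suc p"
  define x2 where "x2 = 1 / (3 * real_of_int q2) ^ Suc p"
  have "x1 \<noteq> 0" "x2 \<noteq> 0" using assms(1,2) unfolding x1_def x2_def by auto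
  have "real_of_int D1 = (3 * real_of_int q1) ^ p * (a * q1 + 3 * q1 * s1)"
    using arg_cong[OF s1, of real_of_int] by (simp add: algebra_simps)
  hence "real_of_int D1 * x1 = a / 3 + s1" using assms(1) unfolding x1_def by (simp add: field_simps)
  hence e1: "expo (of_int_pair (D1, D2)) (x1, 0) = exp (- 2 * complex_of_real pi * \<i> * complex_of_real (a / 3))"
    unfolding expo_def of_int_pair_def using exp_2pi_add_int[of "a / 3" s1] by simp
  have "real_of_int D2 = (3 * real_of_int q2) ^ p * (- a * q2 + 3 * q2 * s2)"
    using arg_cong[OF s2, of real_of_int] by (simp add: algebra_simps)
  hence "real_of_int D2 * x2 = - a / 3 + s2" using assms(2) unfolding x2_def by (simp add: field_simps)
  hence e2: "expo (of_int_pair (D1, D2)) (0, x2) = exp (- 2 * complex_of_real pi * \<i> * complex_of_real (- a / 3))"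
    unfolding expo_def of_int_pair_def using exp_2pi_add_int[of "- a / 3" s2] by simp
  have "AinvD q1 q2 (Suc p) = {(0, 0), (x1, 0), (0, x2)}" unfolding AinvD_def x1_def x2_def by simp
  hence "dintegral (delta_set (AinvD q1 q2 (Suc p))) (expo (of_int_pair (D1, D2))) =
      (1 + expo (of_int_pair (D1, D2)) (x1, 0) + expo (of_int_pair (D1, D2)) (0, x2)) / 3"
    using \<open>x1 \<noteq> 0\<close> \<open>x2 \<noteq> 0\<close> by (simp add: dintegral_delta_set add.assoc)
  thus ?thesis unfolding e1 e2 cube_roots_of_unity_sum[OF assms(3)] by simp
qed

section \<open>Balanced ternary expansions\<close>

definition ternary_val :: "int list \<Rightarrow> int" where
  "ternary_val I = (\<Sum>j < length I. I ! j * 3 ^ j)"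

definition balanced_ternary :: "int \<Rightarrow> int list \<Rightarrow> bool" where
  "balanced_ternary k I \<longleftrightarrow> I \<noteq> [] \<and> set I \<subseteq> Theta3 \<and> last I \<noteq> 0 \<and> k = ternary_val I"

lemma ternary_val_Nil [simp]: "ternary_val [] = 0"
  by (simp add: ternary_val_def)

lemma ternary_val_Cons [simp]: "ternary_val (x # xs) = x + 3 * ternary_val xs"
  unfolding ternary_val_def
  by (simp add: sum.lessThan_Suc_shift sum_distrib_left mult_ac del: sum.lessThan_Suc)

lemma Theta3_iff: "x \<in> Theta3 \<longleftrightarrow> x = -1 \<or> x = 0 \<or> x = 1"
  by (auto simp: Theta3_def)

lemma ternary_val_neq_0:
  "xs \<noteq> [] \<Longrightarrow> set xs \<subseteq> Theta3 \<Longrightarrow> last xs \<noteq> 0 \<Longrightarrow> ternary_val xs \<noteq> 0"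
proof (induction xs)
  case (Cons x xs)
  thus ?case by (cases "xs = []") (auto simp: Theta3_iff)
qed simp

lemma ternary_val_inj:
  assumes "set xs \<subseteq> Theta3" "xs = [] \<or> last xs \<noteq> 0"
    and "set ys \<subseteq> Theta3" "ys = [] \<or> last ys \<noteq> 0"
    and "ternary_val xs = ternary_val ys"
  shows "xs = ys"
  using assms
proof (induction xs arbitrary: ys)
  case Nil
  thus ?case using ternary_val_neq_0[of ys] by auto
next
  case (Cons x xs)
  have "ternary_val ys \<noteq> 0"
    using Cons.prems ternary_val_neq_0[of "x # xs"] by simp
  then obtain y ys' where ys: "ys = y # ys'" by (cases ys) auto
  have x: "x = -1 \<or> x = 0 \<or> x = 1" and y: "y = -1 \<or> y = 0 \<or> y = 1"
    using Cons.prems ys by (auto simp: Theta3_iff)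
  have eq: "x + 3 * ternary_val xs = y + 3 * ternary_val ys'" using Cons.prems(5) ys by simp
  have "x = y" using x y eq by presburger
  moreover have "xs = ys'"
  proof (rule Cons.IH)
    show "ternary_val xs = ternary_val ys'" using eq \<open>x = y\<close> by simp
  qed (use Cons.prems ys in \<open>auto split: if_splits\<close>)
  ultimately show ?case using ys by simp
qed

lemma balanced_ternary_exists: "k \<noteq> 0 \<Longrightarrow> \<exists>I. balanced_ternary k I"
proof (induction "nat \<bar>k\<bar>" arbitrary: k rule: less_induct)
  case less
  define r where "r = (k + 1) mod 3 - 1"
  define m where "m = (k - r) div 3"
  have r: "r \<in> Theta3" unfolding r_def Theta3_def by auto
  have k: "k = r + 3 * m" unfolding m_def r_def by presburger
  show ?case
  proof (cases "m = 0")
    case True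
    thus ?thesis using k less.prems r by (intro exI[of _ "[r]"]) (auto simp: balanced_ternary_def)
  next
    case False
    have "nat \<bar>m\<bar> < nat \<bar>k\<bar>" using k r False by (auto simp: Theta3_def)
    then obtain I where "balanced_ternary m I" using less False by blast
    thus ?thesis using k r by (intro exI[of _ "r # I"]) (auto simp: balanced_ternary_def)
  qed
qed

lemma balanced_ternary_bt_digits:
  assumes "k \<noteq> 0"
  shows "balanced_ternary k (bt_digits k)"
proof -
  obtain I where I: "balanced_ternary k I" using balanced_ternary_exists[OF assms] by blast
  have unique: "J = I" if "balanced_ternary k J" for J
    using I that unfolding balanced_ternary_def by (intro ternary_val_inj) auto
  have "bt_digits k = (THE J. balanced_ternary k J)"
    by (simp add: bt_digits_def balanced_ternary_def ternary_val_def)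
  also have "\<dots> = I" using I unique by (rule the_equality)
  finally show ?thesis using I by simp
qed

lemma ternary_sum_bound:
  "(\<And>j. j < m \<Longrightarrow> d j \<in> Theta3) \<Longrightarrow> 2 * \<bar>\<Sum>j<m. d j * 3 ^ j\<bar> \<le> 3 ^ m - (1::int)"
proof (induction m)
  case (Suc m)
  have "\<bar>d m\<bar> \<le> 1" using Suc.prems[of m] by (auto simp: Theta3_def)
  hence "\<bar>d m * 3 ^ m\<bar> \<le> 3 ^ m" by (simp add: abs_mult)
  thus ?case using Suc abs_triangle_ineq[of "\<Sum>j<m. d j * 3 ^ j" "d m * 3 ^ m"] by simp
qed simp

lemma length_balanced_ternary_le:
  assumes "balanced_ternary k I" "2 * \<bar>k\<bar> \<le> 3 ^ n - 1"
  shows "length I \<le> n"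
proof -
  obtain m where m: "length I = Suc m" using assms(1) by (cases "length I") (auto simp: balanced_ternary_def)
  have k: "k = (\<Sum>j<m. I ! j * 3 ^ j) + I ! m * 3 ^ m"
    using assms(1) m by (simp add: balanced_ternary_def ternary_val_def)
  have "I ! m = last I" using m assms(1) by (simp add: balanced_ternary_def last_conv_nth)
  moreover have "last I \<in> Theta3" using assms(1) by (auto simp: balanced_ternary_def)
  ultimately have "\<bar>I ! m * 3 ^ m\<bar> = 3 ^ m" using assms(1)
    by (auto simp: balanced_ternary_def Theta3_def abs_mult)
  moreover have "\<bar>I ! m * 3 ^ m\<bar> \<le> \<bar>k\<bar> + \<bar>\<Sum>j<m. I ! j * 3 ^ j\<bar>"
    using abs_triangle_ineq4[of k "\<Sum>j<m. I ! j * 3 ^ j"] k by simp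
  moreover have "2 * \<bar>\<Sum>j<m. I ! j * 3 ^ j\<bar> \<le> 3 ^ m - 1"
    using assms(1) m by (intro ternary_sum_bound) (auto simp: balanced_ternary_def)
  ultimately have "(3::int) ^ m < 3 ^ n" using assms(2) by linarith
  thus ?thesis using m by simp
qed

text \<open>The word \<open>i\<^sub>1 i\<^sub>2 \<dots> i\<^sub>n 0\<^sup>\<infinity>\<close> of the enumeration; \<open>k = 0\<close> is treated apart
  because \<^term>\<open>bt_digits 0\<close> is unspecified (a THE over an empty predicate).\<close>
definition bt_word :: "int \<Rightarrow> nat \<Rightarrow> int" where
  "bt_word k = (if k = 0 then (\<lambda>_. 0) else (\<lambda>j. if j < length (bt_digits k) then bt_digits k ! j else 0))"

lemma bt_word_Theta3: "bt_word k j \<in> Theta3"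
  using balanced_ternary_bt_digits[of k]
  by (auto simp: bt_word_def Theta3_def balanced_ternary_def dest!: nth_mem)

lemma bt_word_eq_0:
  "2 * \<bar>k\<bar> \<le> 3 ^ n - 1 \<Longrightarrow> n \<le> j \<Longrightarrow> bt_word k j = 0"
  using length_balanced_ternary_le[OF balanced_ternary_bt_digits] by (force simp: bt_word_def)

lemma sum_bt_word:
  assumes "2 * \<bar>k\<bar> \<le> 3 ^ n - 1"
  shows "(\<Sum>j<n. bt_word k j * 3 ^ j) = k"
proof (cases "k = 0")
  case False
  hence I: "balanced_ternary k (bt_digits k)" by (rule balanced_ternary_bt_digits)
  have "(\<Sum>j<n. bt_word k j * 3 ^ j) = (\<Sum>j<length (bt_digits k). bt_digits k ! j * 3 ^ j)"
    using length_balanced_ternary_le[OF I assms] False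
    by (intro sum.mono_neutral_cong_right) (auto simp: bt_word_def)
  thus ?thesis using I by (simp add: balanced_ternary_def ternary_val_def)
qed (simp add: bt_word_def)

section \<open>Regular mappings and orthogonality\<close>

definition tau_partial ::
    "int \<Rightarrow> int \<Rightarrow> (int list \<Rightarrow> int \<times> int) \<Rightarrow> (nat \<Rightarrow> int) \<Rightarrow> nat \<Rightarrow> int \<times> int" where
  "tau_partial q1 q2 \<tau> w M = (\<Sum>m = 1..M. Apow q1 q2 (m - 1) (\<tau> (prefix w m)))"

lemma tau_star_eq_tau_partial:
  assumes "\<forall>m\<ge>N. \<tau> (prefix w m) = (0, 0)" "N \<le> M"
  shows "tau_star q1 q2 \<tau> w = tau_partial q1 q2 \<tau> w M"
proof -
  define N0 where "N0 = (LEAST N. \<forall>m\<ge>N. \<tau> (prefix w m) = (0, 0))"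
  have "N0 \<le> N" unfolding N0_def by (rule Least_le) (rule assms(1))
  have "\<forall>m\<ge>N0. \<tau> (prefix w m) = (0, 0)" unfolding N0_def by (rule LeastI[of _ N]) (rule assms(1))
  hence "tau_partial q1 q2 \<tau> w N0 = tau_partial q1 q2 \<tau> w M"
    unfolding tau_partial_def using \<open>N0 \<le> N\<close> assms(2)
    by (intro sum.mono_neutral_left) (auto simp: Apow_def zero_prod_def)
  thus ?thesis by (simp add: tau_star_def tau_partial_def N0_def)
qed

lemma prefix_padded_word:
  "length I \<le> m \<Longrightarrow> prefix (\<lambda>j. if j < length I then I ! j else 0) m = I @ replicate (m - length I) 0"
  by (rule nth_equalityI) (auto simp: prefix_def nth_append)

lemma enum_lambda_eq_tau_partial:
  assumes "regular_mapping q1 q2 \<tau>"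
  shows "\<exists>N. \<forall>M\<ge>N. enum_lambda q1 q2 \<tau> k = tau_partial q1 q2 \<tau> (bt_word k) M"
proof (cases "k = 0")
  case True
  have "\<tau> (prefix (bt_word k) m) = (0, 0)" if "m \<ge> 1" for m
  proof -
    have "prefix (bt_word k) m = replicate (m - 1) 0 @ [0]"
      using True that by (cases m) (auto simp: bt_word_def prefix_def map_replicate_const replicate_append_same)
    thus ?thesis using assms by (simp add: regular_mapping_def Theta3_def)
  qed
  hence "tau_partial q1 q2 \<tau> (bt_word k) M = 0" for M
    unfolding tau_partial_def by (intro sum.neutral ballI) (simp add: Apow_def zero_prod_def)
  thus ?thesis using True by (simp add: enum_lambda_def zero_prod_def)
next
  case False
  define I where "I = bt_digits k"
  have "I \<in> finite_words"
    using balanced_ternary_bt_digits[OF False] by (simp add: I_def balanced_ternary_def finite_words_def)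
  then obtain N where N: "\<forall>n\<ge>N. \<tau> (I @ replicate n 0) = (0, 0)"
    using assms by (auto simp: regular_mapping_def)
  have "bt_word k = (\<lambda>j. if j < length I then I ! j else 0)" using False unfolding bt_word_def I_def by simp
  hence "\<forall>m\<ge>length I + N. \<tau> (prefix (bt_word k) m) = (0, 0)" using N by (simp add: prefix_padded_word)
  moreover have "enum_lambda q1 q2 \<tau> k = tau_star q1 q2 \<tau> (bt_word k)"
    using False by (simp add: enum_lambda_def bt_word_def Let_def)
  ultimately show ?thesis using tau_star_eq_tau_partial by metis
qed

lemma tau_snoc_congA:
  assumes reg: "regular_mapping q1 q2 \<tau>" and "set J \<subseteq> Theta3" "i \<in> Theta3" "i' \<in> Theta3"
  shows "congA q1 q2 (\<tau> (J @ [i]) - \<tau> (J @ [i'])) ((i - i') * q1, - (i - i') * q2)"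
proof (cases "J = replicate (length J) 0")
  case True
  hence "\<tau> (J @ [i]) = (i * q1, - i * q2)" "\<tau> (J @ [i']) = (i' * q1, - i' * q2)"
    using reg assms(3,4) by (metis regular_mapping_def)+
  thus ?thesis by (simp add: congA_def algebra_simps)
next
  case False
  hence "J \<in> finite_words" using assms(2) by (auto simp: finite_words_def)
  then obtain e where e: "\<forall>j \<in> Theta3. congA q1 q2 (\<tau> (J @ [j])) (fst e + j * q1, snd e - j * q2)"
    using reg False unfolding regular_mapping_def by blast
  have "congA q1 q2 (\<tau> (J @ [i])) (fst e + i * q1, snd e - i * q2)"
    and "congA q1 q2 (\<tau> (J @ [i'])) (fst e + i' * q1, snd e - i' * q2)"
    using e assms(3,4) by auto
  hence "(3 * q1) dvd fst (\<tau> (J @ [i])) - (fst e + i * q1)" "(3 * q1) dvd fst (\<tau> (J @ [i'])) - (fst e + i' * q1)"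
    "(3 * q2) dvd snd (\<tau> (J @ [i])) - (snd e - i * q2)" "(3 * q2) dvd snd (\<tau> (J @ [i'])) - (snd e - i' * q2)"
    by (simp_all add: congA_def)
  from dvd_diff[OF this(1,2)] dvd_diff[OF this(3,4)] show ?thesis by (simp add: congA_def algebra_simps)
qed

lemma power_dvd_sum_first_nonzero:
  fixes c b :: "'a::comm_ring_1" and t :: "nat \<Rightarrow> 'a"
  assumes "Suc p \<le> M" "\<And>m. m \<le> p \<Longrightarrow> t m = 0" "c dvd t (Suc p) - b"
  shows "c ^ Suc p dvd (\<Sum>m = 1..M. c ^ (m - 1) * t m) - c ^ p * b"
proof -
  define R where "R = (\<Sum>m\<in>{1..M} - {Suc p}. c ^ (m - 1) * t m)"
  have "(\<Sum>m = 1..M. c ^ (m - 1) * t m) - c ^ p * b = c ^ p * (t (Suc p) - b) + R"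
    unfolding R_def using assms(1) by (subst sum.remove[of _ "Suc p"]) (auto simp: algebra_simps)
  moreover have "c ^ Suc p dvd c ^ p * (t (Suc p) - b)"
    using mult_dvd_mono[OF dvd_refl assms(3), of "c ^ p"] by (metis power_Suc2)
  moreover have "c ^ Suc p dvd R"
    unfolding R_def
  proof (rule dvd_sum)
    fix m assume m: "m \<in> {1..M} - {Suc p}"
    show "c ^ Suc p dvd c ^ (m - 1) * t m"
    proof (cases "m \<le> p")
      case False
      hence "c ^ Suc p dvd c ^ (m - 1)" using m by (intro le_imp_power_dvd) auto
      thus ?thesis by (rule dvd_mult2)
    qed (simp add: assms(2))
  qed
  ultimately show ?thesis by simp
qed

lemma Apow_diff: "Apow q1 q2 k (x - y) = Apow q1 q2 k x - Apow q1 q2 k y"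
  by (simp add: Apow_def algebra_simps)

lemma prefix_cong: "(\<And>j. j < m \<Longrightarrow> w j = w' j) \<Longrightarrow> prefix w m = prefix w' m"
  by (simp add: prefix_def)

lemma fourier_factor_tau_partial_diff_eq_0:
  assumes reg: "regular_mapping q1 q2 \<tau>" and "q1 \<noteq> 0" "q2 \<noteq> 0"
    and digits: "\<And>j. w j \<in> Theta3" "\<And>j. w' j \<in> Theta3"
    and agree: "\<And>j. j < p \<Longrightarrow> w j = w' j" and "w p \<noteq> w' p" and "Suc p \<le> M"
  shows "dintegral (delta_set (AinvD q1 q2 (Suc p)))
           (expo (of_int_pair (tau_partial q1 q2 \<tau> w M - tau_partial q1 q2 \<tau> w' M))) = 0"
proof -
  define t where "t m = \<tau> (prefix w m) - \<tau> (prefix w' m)" for m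
  define a where "a = w p - w' p"
  define D where "D = tau_partial q1 q2 \<tau> w M - tau_partial q1 q2 \<tau> w' M"
  have "\<not> 3 dvd a" using digits[of p] \<open>w p \<noteq> w' p\<close> unfolding a_def by (auto simp: Theta3_def)
  have "prefix w m = prefix w' m" if "m \<le> p" for m
    using agree that by (intro prefix_cong) auto
  hence t_0: "t m = 0" if "m \<le> p" for m
    using that unfolding t_def by simp
  have "prefix w (Suc p) = prefix w p @ [w p]" "prefix w' (Suc p) = prefix w p @ [w' p]"
    using prefix_cong[of p w' w] agree by (simp_all add: prefix_def)
  moreover have "set (prefix w p) \<subseteq> Theta3" using digits by (auto simp: prefix_def)
  ultimately have "congA q1 q2 (t (Suc p)) (a * q1, - a * q2)"
    unfolding t_def a_def using tau_snoc_congA[OF reg _ digits(1,2)] by simp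
  hence t_Suc: "3 * q1 dvd fst (t (Suc p)) - a * q1" "3 * q2 dvd snd (t (Suc p)) - (- a * q2)"
    by (simp_all add: congA_def)
  have D: "D = (\<Sum>m = 1..M. Apow q1 q2 (m - 1) (t m))"
    unfolding D_def tau_partial_def t_def by (simp add: Apow_diff sum_subtractf)
  have "(3 * q1) ^ Suc p dvd (\<Sum>m = 1..M. (3 * q1) ^ (m - 1) * fst (t m)) - (3 * q1) ^ p * (a * q1)"
    using \<open>Suc p \<le> M\<close> t_0 t_Suc(1) by (intro power_dvd_sum_first_nonzero) auto
  moreover have "(3 * q2) ^ Suc p dvd (\<Sum>m = 1..M. (3 * q2) ^ (m - 1) * snd (t m)) - (3 * q2) ^ p * (- a * q2)"
    using \<open>Suc p \<le> M\<close> t_0 t_Suc(2) by (intro power_dvd_sum_first_nonzero) auto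
  ultimately have "dintegral (delta_set (AinvD q1 q2 (Suc p))) (expo (of_int_pair (fst D, snd D))) = 0"
    using \<open>q1 \<noteq> 0\<close> \<open>q2 \<noteq> 0\<close> \<open>\<not> 3 dvd a\<close>
    by (intro fourier_delta_AinvD_eq_0) (simp_all add: D fst_sum snd_sum Apow_def)
  thus ?thesis unfolding prod.collapse D_def .
qed

lemma fourier_factor_enum_lambda_diff_eq_0:
  assumes reg: "regular_mapping q1 q2 \<tau>" and "q1 \<noteq> 0" "q2 \<noteq> 0"
    and k: "2 * \<bar>k\<bar> \<le> 3 ^ n - 1" and k': "2 * \<bar>k'\<bar> \<le> 3 ^ n - 1" and "k \<noteq> k'"
  shows "\<exists>p<n. dintegral (delta_set (AinvD q1 q2 (Suc p)))
           (expo (of_int_pair (enum_lambda q1 q2 \<tau> k - enum_lambda q1 q2 \<tau> k'))) = 0"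
proof -
  have "bt_word k \<noteq> bt_word k'" using sum_bt_word[OF k] sum_bt_word[OF k'] \<open>k \<noteq> k'\<close> by metis
  hence "\<exists>j. bt_word k j \<noteq> bt_word k' j" by (auto simp: fun_eq_iff)
  define p where "p = (LEAST j. bt_word k j \<noteq> bt_word k' j)"
  have "bt_word k p \<noteq> bt_word k' p"
    unfolding p_def using \<open>\<exists>j. bt_word k j \<noteq> bt_word k' j\<close> by (rule LeastI_ex)
  moreover have "bt_word k j = bt_word k' j" if "j < p" for j
    using that not_less_Least unfolding p_def by blast
  moreover have "p < n"
    using bt_word_eq_0[OF k] bt_word_eq_0[OF k'] \<open>bt_word k p \<noteq> bt_word k' p\<close> by (metis not_less)
  moreover obtain N where N: "\<forall>M\<ge>N. enum_lambda q1 q2 \<tau> k = tau_partial q1 q2 \<tau> (bt_word k) M"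
    using enum_lambda_eq_tau_partial[OF reg] by blast
  moreover obtain N' where N': "\<forall>M\<ge>N'. enum_lambda q1 q2 \<tau> k' = tau_partial q1 q2 \<tau> (bt_word k') M"
    using enum_lambda_eq_tau_partial[OF reg] by blast
  define M where "M = max (max N N') (Suc p)"
  have "enum_lambda q1 q2 \<tau> k - enum_lambda q1 q2 \<tau> k' =
      tau_partial q1 q2 \<tau> (bt_word k) M - tau_partial q1 q2 \<tau> (bt_word k') M"
    using N[rule_format, of M] N'[rule_format, of M] by (simp add: M_def)
  ultimately show ?thesis
    using fourier_factor_tau_partial_diff_eq_0[OF reg \<open>q1 \<noteq> 0\<close> \<open>q2 \<noteq> 0\<close>,
        where w = "bt_word k" and w' = "bt_word k'" and p = p and M = M]
    by (auto simp: bt_word_Theta3 M_def)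
qed

lemma of_int_pair_diff: "of_int_pair a - of_int_pair b = of_int_pair (a - b)"
  by (simp add: of_int_pair_def)

lemma L2_inner_mu_n_enum_lambda:
  assumes "regular_mapping q1 q2 \<tau>" "q1 \<noteq> 0" "q2 \<noteq> 0"
    and "2 * \<bar>k\<bar> \<le> 3 ^ n - 1" "2 * \<bar>k'\<bar> \<le> 3 ^ n - 1"
  shows "L2_inner (mu_n q1 q2 n) (expo (of_int_pair (enum_lambda q1 q2 \<tau> k)))
           (expo (of_int_pair (enum_lambda q1 q2 \<tau> k'))) = (if k = k' then 1 else 0)"
proof (cases "k = k'")
  case False
  then obtain p where "p < n" and "dintegral (delta_set (AinvD q1 q2 (Suc p)))
      (expo (of_int_pair (enum_lambda q1 q2 \<tau> k - enum_lambda q1 q2 \<tau> k'))) = 0"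
    using fourier_factor_enum_lambda_diff_eq_0[OF assms] by blast
  hence "L2_inner (mu_n q1 q2 n) (expo (of_int_pair (enum_lambda q1 q2 \<tau> k)))
      (expo (of_int_pair (enum_lambda q1 q2 \<tau> k'))) = 0"
    unfolding L2_inner_expo dintegral_mu_n_expo of_int_pair_diff by (intro prod_zero) auto
  thus ?thesis using False by simp
qed (simp add: L2_inner_mu_n_expo_self)

lemma spectral_with_orthonormalI:
  assumes "finite (dsupp \<mu>)" "\<And>x. \<mu> x \<ge> 0" "finite \<Lambda>" "card (dsupp \<mu>) \<le> card \<Lambda>"
    and orthonormal: "\<And>l l'. l \<in> \<Lambda> \<Longrightarrow> l' \<in> \<Lambda> \<Longrightarrow>
      L2_inner \<mu> (expo l) (expo l') = (if l = l' then 1 else 0)"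
  shows "spectral_with \<mu> \<Lambda>"
proof -
  have "\<exists>c. \<forall>x\<in>dsupp \<mu>. f x = (\<Sum>l\<in>\<Lambda>. c l * expo l x)" for f
  proof (rule orthonormal_family_spans[OF assms(1,3,4)])
    fix l l' assume "l \<in> \<Lambda>" "l' \<in> \<Lambda>"
    thus "(\<Sum>x\<in>dsupp \<mu>. complex_of_real (\<mu> x) * expo l x * cnj (expo l' x)) = (if l = l' then 1 else 0)"
      using orthonormal unfolding L2_inner_def by simp
  qed
  hence "\<exists>F c. finite F \<and> F \<subseteq> \<Lambda> \<and> (\<forall>x\<in>dsupp \<mu>. f x = (\<Sum>l\<in>F. c l * expo l x))" for f
    using \<open>finite \<Lambda>\<close> by blast
  thus ?thesis unfolding spectral_with_def using assms(1,2) orthonormal by simp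
qed

lemma spectral_with_indexed_orthonormalI:
  assumes "finite (dsupp \<mu>)" "\<And>x. \<mu> x \<ge> 0" "finite K" "card (dsupp \<mu>) \<le> card K"
    and orthonormal: "\<And>k k'. k \<in> K \<Longrightarrow> k' \<in> K \<Longrightarrow>
      L2_inner \<mu> (expo (lam k)) (expo (lam k')) = (if k = k' then 1 else 0)"
  shows "spectral_with \<mu> (lam ` K)"
proof -
  have "inj_on lam K"
  proof (rule inj_onI, rule ccontr)
    fix k k' assume "k \<in> K" "k' \<in> K" "lam k = lam k'" "k \<noteq> k'"
    thus False using orthonormal[of k k] orthonormal[of k k'] by simp
  qed
  show ?thesis
  proof (rule spectral_with_orthonormalI)
    show "card (dsupp \<mu>) \<le> card (lam ` K)" using assms(4) card_image[OF \<open>inj_on lam K\<close>] by simp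
  next
    fix l l' assume "l \<in> lam ` K" "l' \<in> lam ` K"
    then obtain k k' where "k \<in> K" "k' \<in> K" "l = lam k" "l' = lam k'" by blast
    thus "L2_inner \<mu> (expo l) (expo l') = (if l = l' then 1 else 0)"
      using orthonormal inj_on_eq_iff[OF \<open>inj_on lam K\<close>] by simp
  qed (use assms in auto)
qed

theorem lemma3p5:
  fixes q1 q2 :: int and \<tau> :: "int list \<Rightarrow> int \<times> int" and n :: nat
  assumes "1 \<le> q1" and "q1 \<le> q2"
    and "regular_mapping q1 q2 \<tau>"
    and "n \<ge> 1"
  shows "spectral_with (mu_n q1 q2 n)
           {of_int_pair (enum_lambda q1 q2 \<tau> k) | k. - ((3 ^ n - 1) div 2) \<le> k \<and> k \<le> (3 ^ n - 1) div 2}"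
proof -
  define \<alpha> :: int where "\<alpha> = (3 ^ n - 1) div 2"
  have "q1 \<noteq> 0" "q2 \<noteq> 0" using assms(1,2) by auto
  have "2 * \<alpha> = 3 ^ n - 1" unfolding \<alpha>_def by (intro even_two_times_div_two) simp
  hence range: "2 * \<bar>k\<bar> \<le> 3 ^ n - 1" if "k \<in> {-\<alpha>..\<alpha>}" for k using that by auto
  have \<Lambda>: "{of_int_pair (enum_lambda q1 q2 \<tau> k) | k. - \<alpha> \<le> k \<and> k \<le> \<alpha>} =
      (\<lambda>k. of_int_pair (enum_lambda q1 q2 \<tau> k)) ` {-\<alpha>..\<alpha>}"
    by auto
  show ?thesis unfolding \<alpha>_def[symmetric] \<Lambda>
  proof (rule spectral_with_indexed_orthonormalI[OF finite_dsupp_mu_n mu_n_nonneg finite_atLeastAtMost_int])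
    show "card (dsupp (mu_n q1 q2 n)) \<le> card {-\<alpha>..\<alpha>}"
      using card_dsupp_mu_n_le[of q1 q2 n] \<open>2 * \<alpha> = 3 ^ n - 1\<close> by (simp add: nat_power_eq)
  next
    fix k k' assume "k \<in> {-\<alpha>..\<alpha>}" "k' \<in> {-\<alpha>..\<alpha>}"
    with \<open>q1 \<noteq> 0\<close> \<open>q2 \<noteq> 0\<close>
    show "L2_inner (mu_n q1 q2 n) (expo (of_int_pair (enum_lambda q1 q2 \<tau> k)))
        (expo (of_int_pair (enum_lambda q1 q2 \<tau> k'))) = (if k = k' then 1 else 0)"
      by (intro L2_inner_mu_n_enum_lambda[OF assms(3)] range)
  qed
qed

end
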